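(* Let $(R,\mathfrak m)$ be a Noetherian local ring and $\mathfrak a_\bullet=(\mathfrak a_m)_{m\ge0}$ a graded sequence of $\mathfrak m$-primary ideals ($\mathfrak a_0=R$, $\mathfrak a_m\supseteq\mathfrak a_{m+1}$, $\mathfrak a_m\mathfrak a_{m'}\subseteq\mathfrak a_{m+m'}$). Assume that the linear topology on $R$ defined by $\mathfrak a_1\supset\mathfrak a_2\supset\cdots$ coincides with the $\mathfrak m$-adic topology, and that $\bigoplus_{m\ge0}\mathfrak a_m/\mathfrak a_{m+1}$ is a finitely generated $R/\mathfrak a_1$-algebra. Then $\bigoplus_{m\ge0}\mathfrak a_m$ is a finitely generated $R$-algebra. *)

theory Defs
  imports "HOL-Algebra.Algebra" "HOL-Algebra.Ideal_Product"
begin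

definition local_ring_with :: "('a, 'b) ring_scheme \<Rightarrow> 'a set \<Rightarrow> bool" where
  "local_ring_with R m \<longleftrightarrow> cring R \<and> maximalideal m R \<and> (\<forall>J. maximalideal J R \<longrightarrow> J = m)"

definition radical_of :: "('a, 'b) ring_scheme \<Rightarrow> 'a set \<Rightarrow> 'a set" where
  "radical_of R I = {x \<in> carrier R. \<exists>n::nat. x [^]\<^bsub>R\<^esub> n \<in> I}"

definition primary_ideal :: "('a, 'b) ring_scheme \<Rightarrow> 'a set \<Rightarrow> bool" where
  "primary_ideal R q \<longleftrightarrow> ideal q R \<and> q \<noteq> carrier R \<and>
     (\<forall>x\<in>carrier R. \<forall>y\<in>carrier R. x \<otimes>\<^bsub>R\<^esub> y \<in> q \<longrightarrow> x \<in> q \<or> y \<in> radical_of R q)"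

definition m_primary :: "('a, 'b) ring_scheme \<Rightarrow> 'a set \<Rightarrow> 'a set \<Rightarrow> bool" where
  "m_primary R m q \<longleftrightarrow> primary_ideal R q \<and> radical_of R q = m"

fun ideal_pow :: "('a, 'b) ring_scheme \<Rightarrow> 'a set \<Rightarrow> nat \<Rightarrow> 'a set" where
  "ideal_pow R I 0 = carrier R"
| "ideal_pow R I (Suc n) = ideal_prod R I (ideal_pow R I n)"

definition graded_seq_m_primary :: "('a, 'b) ring_scheme \<Rightarrow> 'a set \<Rightarrow> (nat \<Rightarrow> 'a set) \<Rightarrow> bool" where
  "graded_seq_m_primary R m a \<longleftrightarrow> a 0 = carrier R \<and> (\<forall>k\<ge>1. m_primary R m (a k)) \<and>
     (\<forall>k. a (Suc k) \<subseteq> a k) \<and> (\<forall>k l. ideal_prod R (a k) (a l) \<subseteq> a (k + l))"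

definition same_topology :: "('a, 'b) ring_scheme \<Rightarrow> 'a set \<Rightarrow> (nat \<Rightarrow> 'a set) \<Rightarrow> bool" where
  "same_topology R m a \<longleftrightarrow> (\<forall>n. \<exists>k. a k \<subseteq> ideal_pow R m n) \<and> (\<forall>k. \<exists>n. ideal_pow R m n \<subseteq> a k)"

text \<open>The Rees algebra (direct sum of the a_k), realised inside R[t] as the
  polynomials whose k-th coefficient lies in a_k.\<close>
definition rees_carrier :: "('a, 'b) ring_scheme \<Rightarrow> (nat \<Rightarrow> 'a set) \<Rightarrow> (nat \<Rightarrow> 'a) set" where
  "rees_carrier R a = {p \<in> carrier (UP R). \<forall>k. coeff (UP R) p k \<in> a k}"

definition rees_ring :: "('a, 'b) ring_scheme \<Rightarrow> (nat \<Rightarrow> 'a set) \<Rightarrow> ('a, nat \<Rightarrow> 'a) up_ring" where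
  "rees_ring R a = (UP R)\<lparr>carrier := rees_carrier R a\<rparr>"

definition rees_shift_ideal :: "('a, 'b) ring_scheme \<Rightarrow> (nat \<Rightarrow> 'a set) \<Rightarrow> (nat \<Rightarrow> 'a) set" where
  "rees_shift_ideal R a = {p \<in> carrier (UP R). \<forall>k. coeff (UP R) p k \<in> a (Suc k)}"

text \<open>Associated graded ring: direct sum of a_k / a_(k+1).\<close>
definition assoc_graded :: "('a, 'b) ring_scheme \<Rightarrow> (nat \<Rightarrow> 'a set) \<Rightarrow> (nat \<Rightarrow> 'a) set ring" where
  "assoc_graded R a = rees_ring R a Quot rees_shift_ideal R a"

text \<open>Structure maps of R into the Rees algebra and into the associated graded ring
  (via constants in degree 0).  The latter factors through R/a_1.\<close>
definition rees_const :: "('a, 'b) ring_scheme \<Rightarrow> 'a \<Rightarrow> (nat \<Rightarrow> 'a)" where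
  "rees_const R r = monom (UP R) r 0"

definition gr_const :: "('a, 'b) ring_scheme \<Rightarrow> (nat \<Rightarrow> 'a set) \<Rightarrow> 'a \<Rightarrow> (nat \<Rightarrow> 'a) set" where
  "gr_const R a r = rees_shift_ideal R a +>\<^bsub>rees_ring R a\<^esub> rees_const R r"

definition fin_gen_algebra :: "('a, 'b) ring_scheme \<Rightarrow> ('c, 'd) ring_scheme \<Rightarrow> ('a \<Rightarrow> 'c) \<Rightarrow> bool" where
  "fin_gen_algebra R S f \<longleftrightarrow>
     (\<exists>G. finite G \<and> G \<subseteq> carrier S \<and> generate_ring S (f ` carrier R \<union> G) = carrier S)"

end

theory Submission
  imports Defs
begin

text \<open>Lift finitely many homogeneous generators of the associated graded ring to elements
  \<open>f \<in> a d\<close>, \<open>d \<ge> 1\<close>, and let \<open>J n\<close> be the ideal generated by the products \<open>f \<cdot> a (n - d)\<close>.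
  Generation of the graded ring means \<open>a n = J n + a (n + 1)\<close> for \<open>n \<ge> 1\<close>. Beyond the largest
  degree \<open>D\<close> of a lift the ideals \<open>J n\<close> decrease, so \<open>a n = J n + a N\<close> for all \<open>N \<ge> n\<close>. Since
  the \<open>a\<close>-topology is the \<open>m\<close>-adic one, \<open>a N \<subseteq> m \<cdot> a n\<close> for large \<open>N\<close>, and Nakayama's lemma
  gives \<open>a n = J n\<close>. Hence the Rees algebra is generated over \<open>R\<close> by the lifts \<open>f t\<^sup>d\<close> together
  with generators of the finitely many ideals \<open>a k\<close>, \<open>1 \<le> k \<le> D\<close>, placed in degree \<open>k\<close>.\<close>

no_notation Sum_Type.Plus (infixr \<open><+>\<close> 65)

section \<open>Ideals, Nakayama's lemma and local rings\<close>

lemma (in ring) set_add_iff: "x \<in> A <+> B \<longleftrightarrow> (\<exists>u\<in>A. \<exists>v\<in>B. x = u \<oplus> v)"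
  unfolding set_add_def' by blast

lemma (in ring) ideal_subset_set_add:
  assumes "ideal I R" "ideal K R"
  shows "I \<subseteq> I <+> K" and "K \<subseteq> I <+> K"
  using union_genideal[OF assms] genideal_self[of "I \<union> K"] ideal.Icarr[OF assms(1)]
    ideal.Icarr[OF assms(2)] by blast+

lemma (in ring) set_add_least:
  assumes "ideal I R" "ideal K R" "ideal L R" "I \<subseteq> L" "K \<subseteq> L"
  shows "I <+> K \<subseteq> L"
  using union_genideal[OF assms(1,2)] genideal_minimal[OF assms(3), of "I \<union> K"] assms(4,5) by simp

lemma (in ring) set_add_rotate:
  assumes "I \<subseteq> carrier R" "K \<subseteq> carrier R" "L \<subseteq> carrier R"
  shows "I <+> (K <+> L) \<subseteq> (I <+> L) <+> K"
proof
  fix x assume "x \<in> I <+> (K <+> L)"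
  then obtain i k l where ikl: "i \<in> I" "k \<in> K" "l \<in> L" "x = i \<oplus> (k \<oplus> l)"
    by (auto simp: set_add_iff)
  have "i \<in> carrier R" "k \<in> carrier R" "l \<in> carrier R" using ikl(1-3) assms by blast+
  then have "x = (i \<oplus> l) \<oplus> k" using ikl(4) by (simp add: a_ac)
  moreover have "i \<oplus> l \<in> I <+> L" using ikl(1,3) set_add_iff by blast
  ultimately show "x \<in> (I <+> L) <+> K" using ikl(2) set_add_iff by blast
qed

lemma (in cring) genideal_insert:
  assumes "x \<in> carrier R" "B \<subseteq> carrier R"
  shows "Idl (insert x B) = PIdl x <+> Idl B"
proof
  have ideals: "ideal (PIdl x) R" "ideal (Idl B) R"
    using assms by (auto intro: cgenideal_ideal genideal_ideal)
  show "Idl (insert x B) \<subseteq> PIdl x <+> Idl B"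
    using ideal_subset_set_add[OF ideals] cgenideal_self[OF assms(1)] genideal_self[OF assms(2)]
    by (intro genideal_minimal[OF add_ideals[OF ideals]]) blast
  have "ideal (Idl (insert x B)) R" using assms by (intro genideal_ideal) auto
  then show "PIdl x <+> Idl B \<subseteq> Idl (insert x B)"
    using genideal_self[of "insert x B"] assms
    by (intro set_add_least ideals cgenideal_minimal genideal_minimal) auto
qed

lemma (in cring) cring_idealI:
  assumes "I \<subseteq> carrier R" "\<zero> \<in> I" "\<And>x y. x \<in> I \<Longrightarrow> y \<in> I \<Longrightarrow> x \<oplus> y \<in> I"
    "\<And>x. x \<in> I \<Longrightarrow> \<ominus> x \<in> I" "\<And>r x. r \<in> carrier R \<Longrightarrow> x \<in> I \<Longrightarrow> r \<otimes> x \<in> I"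
  shows "ideal I R"
proof (rule idealI[OF ring_axioms])
  show "subgroup I (add_monoid R)"
    using add.subgroupI[OF assms(1) _ assms(4) assms(3)] assms(2) by auto
  show "\<And>a x. a \<in> I \<Longrightarrow> x \<in> carrier R \<Longrightarrow> x \<otimes> a \<in> I" using assms(5) .
  show "\<And>a x. a \<in> I \<Longrightarrow> x \<in> carrier R \<Longrightarrow> a \<otimes> x \<in> I"
    using assms(1,5) m_comm by (metis subsetD)
qed

lemma (in cring) colon_ideal:
  assumes I: "ideal I R" and y: "y \<in> carrier R"
  shows "ideal {x \<in> carrier R. x \<otimes> y \<in> I} R"
proof (rule cring_idealI)
  interpret I: ideal I R by (rule I)
  show "\<zero> \<in> {x \<in> carrier R. x \<otimes> y \<in> I}" using y by simp
  show "x \<oplus> z \<in> {x \<in> carrier R. x \<otimes> y \<in> I}"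
    if "x \<in> {x \<in> carrier R. x \<otimes> y \<in> I}" "z \<in> {x \<in> carrier R. x \<otimes> y \<in> I}" for x z
    using that y by (auto simp: l_distr)
  show "\<ominus> x \<in> {x \<in> carrier R. x \<otimes> y \<in> I}" if "x \<in> {x \<in> carrier R. x \<otimes> y \<in> I}" for x
    using that y by (auto simp: l_minus)
  show "r \<otimes> x \<in> {x \<in> carrier R. x \<otimes> y \<in> I}"
    if "r \<in> carrier R" "x \<in> {x \<in> carrier R. x \<otimes> y \<in> I}" for r x
    using that y by (auto simp: m_assoc I.I_l_closed)
qed auto

lemma (in ring) additive_subgroup_finsum_closed:
  assumes H: "additive_subgroup H R" and "finite A" "\<And>i. i \<in> A \<Longrightarrow> f i \<in> H"
  shows "finsum R f A \<in> H"
  using assms(2,3)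
proof (induction A rule: finite_induct)
  case empty
  then show ?case using additive_subgroup.zero_closed[OF H] by simp
next
  case (insert x F)
  have "f \<in> F \<rightarrow> carrier R" "f x \<in> carrier R"
    using insert.prems additive_subgroup.a_Hcarr[OF H] by auto
  then show ?case using insert by (simp add: additive_subgroup.a_closed[OF H])
qed

lemma (in ring) FactRing_some_mem_carrier:
  assumes "ideal I R" "c \<in> carrier (R Quot I)"
  shows "(SOME r. r \<in> c) \<in> carrier R"
proof -
  interpret I: ideal I R by (rule assms(1))
  obtain y where y: "y \<in> carrier R" "c = I +> y"
    using assms(2) unfolding FactRing_def A_RCOSETS_def' by auto
  then have "(SOME r. r \<in> c) \<in> c" using I.a_rcos_self by (metis someI)
  then show ?thesis using y I.a_elemrcos_carrier by blast
qed

lemma (in ring) ideal_prod_mono_right: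
  assumes "I \<subseteq> I'" shows "M \<cdot> I \<subseteq> M \<cdot> I'"
proof
  fix s assume "s \<in> M \<cdot> I"
  then show "s \<in> M \<cdot> I'"
    by (induction s rule: ideal_prod.induct) (use assms in \<open>auto intro: ideal_prod.intros\<close>)
qed

lemma (in cring) ideal_prod_cgenideal_elem:
  assumes M: "ideal M R" and x: "x \<in> carrier R" and s: "s \<in> M \<cdot> (PIdl x)"
  shows "\<exists>\<mu>\<in>M. s = \<mu> \<otimes> x"
  using s
proof (induction s rule: ideal_prod.induct)
  case (prod i j)
  then obtain r where "r \<in> carrier R" "j = r \<otimes> x" unfolding cgenideal_def by blast
  with prod(1) show ?case
    using x ideal.Icarr[OF M] ideal.I_r_closed[OF M] by (metis m_assoc)
next
  case (sum s1 s2)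
  then obtain \<mu>1 \<mu>2 where "\<mu>1 \<in> M" "\<mu>2 \<in> M" "s1 = \<mu>1 \<otimes> x" "s2 = \<mu>2 \<otimes> x" by blast
  then show ?case
    using x ideal.Icarr[OF M] additive_subgroup.a_closed[OF ideal.axioms(1)[OF M]]
    by (metis l_distr)
qed

lemma (in cring) mem_ideal_cancel_jacobson:
  assumes M: "ideal M R" and jacobson: "\<And>\<mu>. \<mu> \<in> M \<Longrightarrow> \<one> \<ominus> \<mu> \<in> Units R"
    and I: "ideal I R" and x: "x \<in> carrier R" and x_mem: "x \<in> I <+> M \<cdot> (PIdl x)"
  shows "x \<in> I"
proof -
  obtain j u where ju: "j \<in> I" "u \<in> M \<cdot> (PIdl x)" "x = j \<oplus> u"
    using x_mem set_add_iff by blast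
  obtain \<mu> where \<mu>: "\<mu> \<in> M" "u = \<mu> \<otimes> x" using ideal_prod_cgenideal_elem[OF M x ju(2)] by blast
  have c: "j \<in> carrier R" "\<mu> \<in> carrier R" "u \<in> carrier R"
    using ju(1) \<mu> x ideal.Icarr[OF I] ideal.Icarr[OF M] by auto
  have unit: "\<one> \<ominus> \<mu> \<in> Units R" using jacobson[OF \<mu>(1)] .
  have "(\<one> \<ominus> \<mu>) \<otimes> x = x \<ominus> u" unfolding \<mu>(2) using c x by algebra
  also have "x \<ominus> u = (j \<oplus> u) \<ominus> u" using ju(3) by simp
  also have "\<dots> = j" using c by algebra
  finally have "(\<one> \<ominus> \<mu>) \<otimes> x = j" .
  moreover have "x = inv (\<one> \<ominus> \<mu>) \<otimes> ((\<one> \<ominus> \<mu>) \<otimes> x)"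
    using unit x Units_closed[OF unit] by (simp add: m_assoc[symmetric] Units_l_inv)
  ultimately show ?thesis using ideal.I_l_closed[OF I ju(1) Units_inv_closed[OF unit]] by simp
qed

lemma (in cring) nakayama:
  assumes M: "ideal M R" and jacobson: "\<And>\<mu>. \<mu> \<in> M \<Longrightarrow> \<one> \<ominus> \<mu> \<in> Units R"
    and J: "ideal J R" and A: "finite A" "A \<subseteq> carrier R"
    and sub: "Idl A \<subseteq> J <+> M \<cdot> (Idl A)"
  shows "Idl A \<subseteq> J"
  using A sub J
proof (induction A arbitrary: J rule: finite_induct)
  case empty
  then show ?case using genideal_minimal by blast
next
  case (insert x B)
  have x: "x \<in> carrier R" and B: "B \<subseteq> carrier R" using insert.prems(1) by auto
  have ideals: "ideal (PIdl x) R" "ideal (Idl B) R" "ideal (M \<cdot> (PIdl x)) R" "ideal (M \<cdot> (Idl B)) R"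
    using x B M by (auto intro: cgenideal_ideal genideal_ideal ideal_prod_is_ideal)
  define J' where "J' = J <+> M \<cdot> (Idl B)"
  have J': "ideal J' R" unfolding J'_def using add_ideals[OF insert.prems(3) ideals(4)] .
  have J_J': "J \<subseteq> J'" and MB_J': "M \<cdot> (Idl B) \<subseteq> J'"
    unfolding J'_def using ideal_subset_set_add[OF insert.prems(3) ideals(4)] by auto
  have split: "Idl (insert x B) \<subseteq> J <+> (M \<cdot> (PIdl x) <+> M \<cdot> (Idl B))"
    using insert.prems(2) genideal_insert[OF x B] ideal_prod_r_distr[OF M ideals(1,2)] by simp
  have "x \<in> J <+> (M \<cdot> (PIdl x) <+> M \<cdot> (Idl B))"
    using split genideal_self[OF insert.prems(1)] by blast
  then have "x \<in> J' <+> M \<cdot> (PIdl x)"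
    unfolding J'_def using set_add_rotate[of J "M \<cdot> (PIdl x)" "M \<cdot> (Idl B)"]
      ideal.Icarr[OF insert.prems(3)] ideal.Icarr[OF ideals(3)] ideal.Icarr[OF ideals(4)] by blast
  then have "x \<in> J'" using mem_ideal_cancel_jacobson[OF M jacobson J' x] by blast
  then have "M \<cdot> (PIdl x) \<subseteq> J'"
    using ideal_prod_inter[OF M ideals(1)] cgenideal_minimal[OF J'] by blast
  then have "M \<cdot> (PIdl x) <+> M \<cdot> (Idl B) \<subseteq> J'" by (rule set_add_least[OF ideals(3,4) J' _ MB_J'])
  then have "Idl (insert x B) \<subseteq> J'"
    using split set_add_least[OF insert.prems(3) add_ideals[OF ideals(3,4)] J' J_J'] by blast
  moreover have "Idl B \<subseteq> Idl (insert x B)"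
    using genideal_self[OF insert.prems(1)] by (intro genideal_minimal genideal_ideal insert.prems(1)) auto
  ultimately have "Idl B \<subseteq> J" using insert.IH[OF B _ insert.prems(3)] unfolding J'_def by blast
  then have "J' \<subseteq> J"
    unfolding J'_def using ideal_prod_inter[OF M ideals(2)]
    by (intro set_add_least insert.prems(3) ideals(4)) auto
  with \<open>Idl (insert x B) \<subseteq> J'\<close> show ?case by blast
qed

lemma (in ring) exists_maximalideal_superset:
  assumes I: "ideal I R" and one: "\<one> \<notin> I"
  shows "\<exists>M. maximalideal M R \<and> I \<subseteq> M"
proof -
  define S where "S = {J. ideal J R \<and> I \<subseteq> J \<and> \<one> \<notin> J}"
  have "\<exists>M\<in>S. \<forall>Z\<in>S. M \<subseteq> Z \<longrightarrow> Z = M"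
  proof (rule subset_Zorn)
    fix C assume C: "subset.chain S C"
    show "\<exists>U\<in>S. \<forall>Z\<in>C. Z \<subseteq> U"
    proof (cases "C = {}")
      case True then show ?thesis using I one unfolding S_def by blast
    next
      case False
      have "subset.chain {J. ideal J R} C" using C unfolding pred_on.chain_def S_def by auto
      from chain_Union_is_ideal[OF this] have "ideal (\<Union>C) R" using False by simp
      moreover have "I \<subseteq> \<Union>C" "\<one> \<notin> \<Union>C" using C False unfolding pred_on.chain_def S_def by blast+
      ultimately show ?thesis unfolding S_def by blast
    qed
  qed
  then obtain M where M: "M \<in> S" "\<And>Z. Z \<in> S \<Longrightarrow> M \<subseteq> Z \<Longrightarrow> Z = M" by blast
  have "maximalideal M R"
  proof (rule maximalidealI)
    show "ideal M R" "carrier R \<noteq> M" using M(1) unfolding S_def by auto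
    show "J = M \<or> J = carrier R" if "ideal J R" "M \<subseteq> J" "J \<subseteq> carrier R" for J
      using that M ideal.one_imp_carrier unfolding S_def by blast
  qed
  then show ?thesis using M(1) unfolding S_def by blast
qed

lemma (in cring) local_ring_one_minus_Units:
  assumes local: "local_ring_with R m" and \<mu>: "\<mu> \<in> m"
  shows "\<one> \<ominus> \<mu> \<in> Units R"
proof (rule ccontr)
  interpret m: maximalideal m R using local unfolding local_ring_with_def by blast
  let ?y = "\<one> \<ominus> \<mu>"
  have y: "?y \<in> carrier R" using \<mu> by simp
  assume "?y \<notin> Units R"
  then have "\<one> \<notin> PIdl ?y" using y m_comm unfolding cgenideal_def Units_def by auto
  then obtain M where "maximalideal M R" "PIdl ?y \<subseteq> M"
    using exists_maximalideal_superset[OF cgenideal_ideal[OF y]] by blast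
  then have "?y \<in> m" using local cgenideal_self[OF y] unfolding local_ring_with_def by blast
  then have "?y \<oplus> \<mu> \<in> m" using \<mu> m.a_closed by blast
  moreover have "?y \<oplus> \<mu> = \<one>" using m.Icarr[OF \<mu>] by algebra
  ultimately show False using m.one_imp_carrier m.I_notcarr by simp
qed

section \<open>The Rees algebra of a graded sequence of ideals\<close>

lemma (in UP_cring) monom_subring_ideal:
  assumes S: "subring S P" and const: "\<And>r. r \<in> carrier R \<Longrightarrow> up_ring.monom P r 0 \<in> S"
  shows "ideal {c \<in> carrier R. up_ring.monom P c k \<in> S} R"
proof (rule R.cring_idealI)
  show "\<zero> \<in> {c \<in> carrier R. up_ring.monom P c k \<in> S}" using subringE(2)[OF S] by simp
  show "x \<oplus> y \<in> {c \<in> carrier R. up_ring.monom P c k \<in> S}"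
    if "x \<in> {c \<in> carrier R. up_ring.monom P c k \<in> S}" "y \<in> {c \<in> carrier R. up_ring.monom P c k \<in> S}" for x y
    using that subringE(7)[OF S] by (simp add: monom_add)
  show "\<ominus> x \<in> {c \<in> carrier R. up_ring.monom P c k \<in> S}" if "x \<in> {c \<in> carrier R. up_ring.monom P c k \<in> S}" for x
    using that subringE(5)[OF S] by (simp add: monom_a_inv)
  show "r \<otimes> x \<in> {c \<in> carrier R. up_ring.monom P c k \<in> S}"
    if "r \<in> carrier R" "x \<in> {c \<in> carrier R. up_ring.monom P c k \<in> S}" for r x
    using that subringE(6)[OF S const[OF that(1)]] monom_mult[of r x 0 k] by simp
qed auto

locale graded_ideal_seq = cring R for R (structure) +
  fixes a :: "nat \<Rightarrow> 'a set"
  assumes seq_zero: "a 0 = carrier R"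
    and seq_ideal: "ideal (a k) R"
    and seq_Suc_subset: "a (Suc k) \<subseteq> a k"
    and seq_mult: "x \<in> a k \<Longrightarrow> y \<in> a l \<Longrightarrow> x \<otimes> y \<in> a (k + l)"
begin

sublocale P: UP_cring R "UP R" by (rule UP_cring.intro) (rule is_cring)

abbreviation "cf \<equiv> up_ring.coeff (UP R)"
abbreviation "mn \<equiv> up_ring.monom (UP R)"
abbreviation "Rees \<equiv> rees_ring R a"
abbreviation "Rees_shift \<equiv> rees_shift_ideal R a"

lemma seq_antimono: "k \<le> l \<Longrightarrow> a l \<subseteq> a k"
  by (induction l rule: dec_induct) (use seq_Suc_subset in auto)

lemma seq_carrier: "x \<in> a k \<Longrightarrow> x \<in> carrier R"
  using ideal.Icarr[OF seq_ideal] by blast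

lemma coeff_mult_mem_seq:
  assumes "p \<in> carrier (UP R)" "q \<in> carrier (UP R)" "\<And>i. cf p i \<in> a i" "\<And>i. cf q i \<in> a (i + s)"
  shows "cf (p \<otimes>\<^bsub>UP R\<^esub> q) n \<in> a (n + s)"
proof -
  have "(\<Oplus>i \<in> {..n}. cf p i \<otimes> cf q (n - i)) \<in> a (n + s)"
  proof (rule additive_subgroup_finsum_closed[OF ideal.axioms(1)[OF seq_ideal]], simp)
    fix i assume "i \<in> {..n}"
    then have "i + (n - i + s) = n + s" by auto
    then show "cf p i \<otimes> cf q (n - i) \<in> a (n + s)"
      using seq_mult[OF assms(3)[of i] assms(4)[of "n - i"]] by simp
  qed
  then show ?thesis using assms(1,2) by simp
qed

lemma rees_carrier_subset: "rees_carrier R a \<subseteq> carrier (UP R)"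
  unfolding rees_carrier_def by auto

lemma rees_carrier_subring: "subring (rees_carrier R a) (UP R)"
proof (rule P.subringI)
  interpret seq: additive_subgroup "a k" R for k using ideal.axioms(1)[OF seq_ideal] .
  show "rees_carrier R a \<subseteq> carrier (UP R)" by (rule rees_carrier_subset)
  show "\<one>\<^bsub>UP R\<^esub> \<in> rees_carrier R a" unfolding rees_carrier_def using seq_zero by auto
  show "\<ominus>\<^bsub>UP R\<^esub> h \<in> rees_carrier R a" if "h \<in> rees_carrier R a" for h
    using that unfolding rees_carrier_def by auto
  show "h1 \<oplus>\<^bsub>UP R\<^esub> h2 \<in> rees_carrier R a" if "h1 \<in> rees_carrier R a" "h2 \<in> rees_carrier R a" for h1 h2
    using that unfolding rees_carrier_def by auto
  show "h1 \<otimes>\<^bsub>UP R\<^esub> h2 \<in> rees_carrier R a" if "h1 \<in> rees_carrier R a" "h2 \<in> rees_carrier R a" for h1 h2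
    using that coeff_mult_mem_seq[of h1 h2 0] unfolding rees_carrier_def by auto
qed

lemma rees_ring_is_ring: "ring Rees"
  unfolding rees_ring_def by (rule P.subring_is_ring[OF rees_carrier_subring])

lemma rees_ring_simps [simp]:
  "carrier Rees = rees_carrier R a" "monoid.mult Rees = monoid.mult (UP R)"
  "ring.add Rees = ring.add (UP R)" "monoid.one Rees = monoid.one (UP R)"
  "ring.zero Rees = ring.zero (UP R)"
  unfolding rees_ring_def by simp_all

lemma rees_ring_a_inv: "x \<in> rees_carrier R a \<Longrightarrow> \<ominus>\<^bsub>Rees\<^esub> x = \<ominus>\<^bsub>UP R\<^esub> x"
proof -
  assume x: "x \<in> rees_carrier R a"
  interpret Rees: ring Rees by (rule rees_ring_is_ring)
  have "\<ominus>\<^bsub>UP R\<^esub> x \<in> rees_carrier R a" using subringE(5)[OF rees_carrier_subring x] .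
  moreover have "(\<ominus>\<^bsub>UP R\<^esub> x) \<oplus>\<^bsub>UP R\<^esub> x = \<zero>\<^bsub>UP R\<^esub>"
    using x rees_carrier_subset by (intro P.l_neg) auto
  ultimately show ?thesis using x by (intro Rees.minus_equality) auto
qed

lemma subring_rees_ring_imp_subring:
  assumes "subring S Rees" shows "subring S (UP R)"
proof -
  have "S \<subseteq> carrier (UP R)" using subringE(1)[OF assms] rees_carrier_subset by simp
  moreover have "ring ((UP R)\<lparr>carrier := S\<rparr>)"
    using ring.subring_is_ring[OF rees_ring_is_ring assms] unfolding rees_ring_def by simp
  ultimately show ?thesis using P.subring_iff by blast
qed

lemma rees_shift_ideal_is_ideal: "ideal Rees_shift Rees"
proof (rule idealI[OF rees_ring_is_ring])
  interpret Rees: ring Rees by (rule rees_ring_is_ring)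
  interpret seq: additive_subgroup "a k" R for k using ideal.axioms(1)[OF seq_ideal] .
  have shift_sub: "Rees_shift \<subseteq> rees_carrier R a"
    unfolding rees_shift_ideal_def rees_carrier_def using seq_Suc_subset by blast
  show "subgroup Rees_shift (add_monoid Rees)"
  proof (rule Rees.add.subgroupI)
    show "Rees_shift \<subseteq> carrier Rees" using shift_sub by simp
    show "Rees_shift \<noteq> {}" unfolding rees_shift_ideal_def by force
    show "\<ominus>\<^bsub>Rees\<^esub> x \<in> Rees_shift" if "x \<in> Rees_shift" for x
      using that shift_sub rees_ring_a_inv[of x] unfolding rees_shift_ideal_def by (auto simp: P.coeff_a_inv)
    show "x \<oplus>\<^bsub>Rees\<^esub> y \<in> Rees_shift" if "x \<in> Rees_shift" "y \<in> Rees_shift" for x y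
      using that unfolding rees_shift_ideal_def by auto
  qed
  have mult: "x \<otimes>\<^bsub>UP R\<^esub> s \<in> Rees_shift" if "s \<in> Rees_shift" "x \<in> rees_carrier R a" for s x
    using that coeff_mult_mem_seq[of x s 1] unfolding rees_shift_ideal_def rees_carrier_def by auto
  show "x \<otimes>\<^bsub>Rees\<^esub> s \<in> Rees_shift" if "s \<in> Rees_shift" "x \<in> carrier Rees" for s x
    using mult that by simp
  show "s \<otimes>\<^bsub>Rees\<^esub> x \<in> Rees_shift" if "s \<in> Rees_shift" "x \<in> carrier Rees" for s x
  proof -
    have "s \<otimes>\<^bsub>UP R\<^esub> x = x \<otimes>\<^bsub>UP R\<^esub> s"
      using that shift_sub rees_carrier_subset by (intro P.m_comm) auto
    then show ?thesis using mult that by simp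
  qed
qed

lemma monom_mem_rees_carrier: "c \<in> a n \<Longrightarrow> mn c n \<in> rees_carrier R a"
  unfolding rees_carrier_def using seq_carrier[of c n]
  by (auto simp: P.coeff_monom intro: additive_subgroup.zero_closed[OF ideal.axioms(1)[OF seq_ideal]])

lemma rees_const_mem_rees_carrier: "r \<in> carrier R \<Longrightarrow> rees_const R r \<in> rees_carrier R a"
  unfolding rees_const_def using monom_mem_rees_carrier[of r 0] seq_zero by simp

lemma rees_carrier_subset_subring:
  assumes S: "subring S (UP R)" and monom: "\<And>k c. c \<in> a k \<Longrightarrow> mn c k \<in> S"
  shows "rees_carrier R a \<subseteq> S"
proof
  fix p assume p: "p \<in> rees_carrier R a"
  have S_add: "additive_subgroup S (UP R)" using subring.axioms(1)[OF S] by (rule additive_subgroup.intro)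
  have "\<And>i. mn (cf p i) i \<in> S" using p monom unfolding rees_carrier_def by blast
  then have "(\<Oplus>\<^bsub>UP R\<^esub>i \<in> {..deg R p}. mn (cf p i) i) \<in> S"
    by (rule P.additive_subgroup_finsum_closed[OF S_add finite_atMost])
  then show "p \<in> S" using P.up_repr p rees_carrier_subset by auto
qed

end

lemma graded_seq_m_primary_imp_graded_ideal_seq:
  assumes "cring R" "graded_seq_m_primary R m a"
  shows "graded_ideal_seq R a"
proof -
  interpret cring R by (rule assms(1))
  have a0: "a 0 = carrier R" and primary: "\<And>k. 1 \<le> k \<Longrightarrow> m_primary R m (a k)"
    and "\<And>k. a (Suc k) \<subseteq> a k" and prod: "\<And>k l. ideal_prod R (a k) (a l) \<subseteq> a (k + l)"
    using assms(2) unfolding graded_seq_m_primary_def by auto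
  moreover have "ideal (a k) R" for k
    using a0 oneideal primary[of k] unfolding m_primary_def primary_ideal_def by (cases k) auto
  moreover have "x \<otimes>\<^bsub>R\<^esub> y \<in> a (k + l)" if "x \<in> a k" "y \<in> a l" for x y k l
    using ideal_prod.prod[OF that, of R] prod by blast
  ultimately show ?thesis
    by (intro graded_ideal_seq.intro graded_ideal_seq_axioms.intro assms(1)) blast+
qed

section \<open>Lifting the generators of the associated graded ring\<close>

locale homogeneous_lifts = graded_ideal_seq +
  fixes F :: "(nat \<times> 'a) set"
  assumes finite_F: "finite F" and F_mem: "(d, f) \<in> F \<Longrightarrow> 1 \<le> d \<and> f \<in> a d"
begin

definition gens :: "nat \<Rightarrow> 'a set" where
  "gens n = {f \<otimes> b | d f b. (d, f) \<in> F \<and> d \<le> n \<and> b \<in> a (n - d)}"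

definition J :: "nat \<Rightarrow> 'a set" where "J n = Idl (gens n)"

definition K :: "nat \<Rightarrow> 'a set" where "K n = J n <+> a (Suc n)"

definition K_subring :: "(nat \<Rightarrow> 'a) set" where
  "K_subring = {p \<in> rees_carrier R a. \<forall>n\<ge>1. cf p n \<in> K n}"

definition D :: nat where "D = Max (insert 1 (fst ` F))"

lemma F_le_D: "(d, f) \<in> F \<Longrightarrow> d \<le> D"
  unfolding D_def using finite_F by (intro Max_ge) force+

lemma one_le_D: "1 \<le> D"
  unfolding D_def using finite_F by (intro Max_ge) auto

lemma gens_subset_seq: "gens n \<subseteq> a n"
  unfolding gens_def using F_mem seq_mult by fastforce

lemma gens_carrier: "gens n \<subseteq> carrier R"
  using gens_subset_seq seq_carrier by blast

lemma J_ideal: "ideal (J n) R"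
  unfolding J_def using gens_carrier by (rule genideal_ideal)

lemma K_ideal: "ideal (K n) R"
  unfolding K_def using J_ideal seq_ideal by (rule add_ideals)

lemma gens_subset_J: "gens n \<subseteq> J n"
  unfolding J_def using gens_carrier by (rule genideal_self)

lemma J_subset_K: "J n \<subseteq> K n" and seq_Suc_subset_K: "a (Suc n) \<subseteq> K n"
  unfolding K_def using ideal_subset_set_add[OF J_ideal seq_ideal] by auto

lemma J_mult:
  assumes x: "x \<in> J i" and y: "y \<in> a l"
  shows "x \<otimes> y \<in> J (i + l)"
proof -
  have yc: "y \<in> carrier R" using y seq_carrier by blast
  have "gens i \<subseteq> {x \<in> carrier R. x \<otimes> y \<in> J (i + l)}"
  proof
    fix x assume "x \<in> gens i"
    then obtain d f b where dfb: "(d, f) \<in> F" "d \<le> i" "b \<in> a (i - d)" "x = f \<otimes> b"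
      unfolding gens_def by blast
    have fc: "f \<in> carrier R" and bc: "b \<in> carrier R"
      using F_mem[OF dfb(1)] dfb(3) seq_carrier by auto
    have "b \<otimes> y \<in> a (i + l - d)" using seq_mult[OF dfb(3) y] dfb(2) by (simp add: add.commute)
    then have "f \<otimes> (b \<otimes> y) \<in> gens (i + l)" unfolding gens_def using dfb by fastforce
    then show "x \<in> {x \<in> carrier R. x \<otimes> y \<in> J (i + l)}"
      using gens_subset_J dfb(4) fc bc yc by (auto simp: m_assoc)
  qed
  then have "J i \<subseteq> {x \<in> carrier R. x \<otimes> y \<in> J (i + l)}"
    unfolding J_def[of i] by (rule genideal_minimal[OF colon_ideal[OF J_ideal yc]])
  then show ?thesis using x by blast
qed

lemma K_mult:
  assumes x: "x \<in> K i" and y: "y \<in> a l"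
  shows "x \<otimes> y \<in> K (i + l)"
proof -
  obtain j z where jz: "j \<in> J i" "z \<in> a (Suc i)" "x = j \<oplus> z"
    using x unfolding K_def set_add_iff by blast
  have "j \<otimes> y \<in> J (i + l)" using J_mult[OF jz(1) y] .
  moreover have "z \<otimes> y \<in> a (Suc (i + l))" using seq_mult[OF jz(2) y] by simp
  moreover have "x \<otimes> y = j \<otimes> y \<oplus> z \<otimes> y"
    using jz ideal.Icarr[OF J_ideal] seq_carrier y by (simp add: l_distr)
  ultimately show ?thesis unfolding K_def set_add_iff by blast
qed

lemma K_subring_subring: "subring K_subring Rees"
proof -
  interpret Rees: ring Rees by (rule rees_ring_is_ring)
  interpret K: ideal "K n" R for n by (rule K_ideal)
  show ?thesis
  proof (rule Rees.subringI)
    show "K_subring \<subseteq> carrier Rees" unfolding K_subring_def by auto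
    show "\<one>\<^bsub>Rees\<^esub> \<in> K_subring" unfolding K_subring_def using subringE(3)[OF rees_carrier_subring] by auto
    show "\<ominus>\<^bsub>Rees\<^esub> h \<in> K_subring" if "h \<in> K_subring" for h
      using that rees_carrier_subset rees_ring_a_inv[of h] subringE(5)[OF rees_carrier_subring, of h]
      unfolding K_subring_def by (auto simp: P.coeff_a_inv)
    show "h1 \<oplus>\<^bsub>Rees\<^esub> h2 \<in> K_subring" if "h1 \<in> K_subring" "h2 \<in> K_subring" for h1 h2
      using that subringE(7)[OF rees_carrier_subring, of h1 h2]
      unfolding K_subring_def by (auto intro: K.a_closed simp: rees_carrier_def)
    show "h1 \<otimes>\<^bsub>Rees\<^esub> h2 \<in> K_subring" if "h1 \<in> K_subring" "h2 \<in> K_subring" for h1 h2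
    proof -
      have h: "h1 \<in> rees_carrier R a" "h2 \<in> rees_carrier R a" "\<And>n. 1 \<le> n \<Longrightarrow> cf h1 n \<in> K n"
        "\<And>n. 1 \<le> n \<Longrightarrow> cf h2 n \<in> K n" using that unfolding K_subring_def by auto
      have hc: "h1 \<in> carrier (UP R)" "h2 \<in> carrier (UP R)" using h rees_carrier_subset by auto
      have "cf (h1 \<otimes>\<^bsub>UP R\<^esub> h2) n \<in> K n" if n: "1 \<le> n" for n
      proof -
        have "cf h1 i \<otimes> cf h2 (n - i) \<in> K n" if i: "i \<le> n" for i
        proof (cases "i = 0")
          case True
          then show ?thesis using h(1) h(4)[OF n] K.I_l_closed seq_zero unfolding rees_carrier_def by auto
        next
          case False
          then show ?thesis using K_mult[OF h(3), of i "cf h2 (n - i)" "n - i"] h(2) i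
            unfolding rees_carrier_def by auto
        qed
        then have "(\<Oplus>i \<in> {..n}. cf h1 i \<otimes> cf h2 (n - i)) \<in> K n"
          by (intro additive_subgroup_finsum_closed[OF ideal.axioms(1)[OF K_ideal]]) auto
        then show ?thesis using hc by simp
      qed
      then show ?thesis using subringE(6)[OF rees_carrier_subring h(1,2)] unfolding K_subring_def by simp
    qed
  qed
qed

lemma K_subringI:
  assumes p: "p \<in> rees_carrier R a" and F: "\<And>n. 1 \<le> n \<Longrightarrow> n \<le> deg R p \<Longrightarrow> (n, cf p n) \<in> F"
  shows "p \<in> K_subring"
proof -
  have pc: "p \<in> carrier (UP R)" using p rees_carrier_subset by blast
  have "cf p n \<in> K n" if n: "1 \<le> n" for n
  proof (cases "n \<le> deg R p")
    case True
    have "cf p n \<otimes> \<one> \<in> gens n" unfolding gens_def using F[OF n True] seq_zero by force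
    then show ?thesis using gens_subset_J J_subset_K pc by auto
  next
    case False
    then show ?thesis using P.deg_aboveD[of p n] pc additive_subgroup.zero_closed[OF ideal.axioms(1)[OF K_ideal]]
      by simp
  qed
  then show ?thesis unfolding K_subring_def using p by blast
qed

lemma rees_const_mem_K_subring: "r \<in> carrier R \<Longrightarrow> rees_const R r \<in> K_subring"
  unfolding K_subring_def rees_const_def using rees_const_mem_rees_carrier[of r]
  by (auto simp: rees_const_def P.coeff_monom intro: additive_subgroup.zero_closed[OF ideal.axioms(1)[OF K_ideal]])

lemma assoc_graded_subset_image_K_subring:
  assumes gen: "generate_ring (assoc_graded R a)
      ((\<lambda>c. gr_const R a (SOME r. r \<in> c)) ` carrier (R Quot (a 1)) \<union> G) = carrier (assoc_graded R a)"
    and G: "G \<subseteq> (\<lambda>p. Rees_shift +>\<^bsub>Rees\<^esub> p) ` K_subring"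
  shows "carrier (assoc_graded R a) \<subseteq> (\<lambda>p. Rees_shift +>\<^bsub>Rees\<^esub> p) ` K_subring"
proof -
  interpret shift: ideal Rees_shift Rees by (rule rees_shift_ideal_is_ideal)
  interpret gr: ring "Rees Quot Rees_shift" by (rule shift.quotient_is_ring)
  let ?H = "(\<lambda>c. gr_const R a (SOME r. r \<in> c)) ` carrier (R Quot (a 1)) \<union> G"
  have img: "subring ((\<lambda>p. Rees_shift +>\<^bsub>Rees\<^esub> p) ` K_subring) (Rees Quot Rees_shift)"
    using ring_hom_ring.img_is_subring[OF shift.rcos_ring_hom_ring K_subring_subring] .
  have "?H \<subseteq> carrier (Rees Quot Rees_shift)"
    using gen generate_ring.incl[of _ ?H] unfolding assoc_graded_def by blast
  moreover have "?H \<subseteq> (\<lambda>p. Rees_shift +>\<^bsub>Rees\<^esub> p) ` K_subring"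
    using G FactRing_some_mem_carrier[OF seq_ideal] rees_const_mem_K_subring
    unfolding gr_const_def by blast
  ultimately have "generate_ring (Rees Quot Rees_shift) ?H \<subseteq> (\<lambda>p. Rees_shift +>\<^bsub>Rees\<^esub> p) ` K_subring"
    by (rule gr.generate_ring_min_subring1[OF _ img])
  then show ?thesis using gen unfolding assoc_graded_def by simp
qed

text \<open>Comparing degree-\<open>n\<close> coefficients of two representatives of the class of \<open>c t\<^sup>n\<close>
  in the associated graded ring.\<close>
lemma seq_subset_K:
  assumes "carrier (assoc_graded R a) \<subseteq> (\<lambda>p. Rees_shift +>\<^bsub>Rees\<^esub> p) ` K_subring"
    and n: "1 \<le> n"
  shows "a n \<subseteq> K n"
proof
  interpret shift: ideal Rees_shift Rees by (rule rees_shift_ideal_is_ideal)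
  interpret K: ideal "K n" R by (rule K_ideal)
  fix c assume c: "c \<in> a n"
  have mc: "mn c n \<in> rees_carrier R a" using monom_mem_rees_carrier[OF c] .
  then have "Rees_shift +>\<^bsub>Rees\<^esub> mn c n \<in> carrier (assoc_graded R a)"
    unfolding assoc_graded_def FactRing_def using shift.a_rcosetsI[OF shift.a_subset] by simp
  then obtain q where q: "q \<in> K_subring" "Rees_shift +>\<^bsub>Rees\<^esub> mn c n = Rees_shift +>\<^bsub>Rees\<^esub> q"
    using assms(1) by auto
  have qc: "q \<in> rees_carrier R a" "q \<in> carrier (UP R)"
    using q(1) rees_carrier_subset unfolding K_subring_def by auto
  have "mn c n \<oplus>\<^bsub>Rees\<^esub> \<ominus>\<^bsub>Rees\<^esub> q \<in> Rees_shift"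
    using shift.a_repr_independenceD[of "mn c n" q] q(2) mc qc shift.a_rcos_module_imp by simp
  then have "cf (mn c n \<oplus>\<^bsub>UP R\<^esub> \<ominus>\<^bsub>UP R\<^esub> q) n \<in> a (Suc n)"
    using rees_ring_a_inv[OF qc(1)] unfolding rees_shift_ideal_def by auto
  then have "c \<ominus> cf q n \<in> K n"
    using seq_Suc_subset_K qc(2) seq_carrier[OF c] by (auto simp: P.coeff_monom P.coeff_a_inv minus_eq)
  moreover have "cf q n \<in> K n" using q(1) n unfolding K_subring_def by auto
  moreover have "c = (c \<ominus> cf q n) \<oplus> cf q n"
    using seq_carrier[OF c] P.coeff_closed[OF qc(2)] by algebra
  ultimately show "c \<in> K n" using K.a_closed by metis
qed

lemma J_Suc_subset: "D \<le> n \<Longrightarrow> J (Suc n) \<subseteq> J n"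
  unfolding J_def[of "Suc n"]
proof (rule genideal_minimal[OF J_ideal])
  assume n: "D \<le> n"
  show "gens (Suc n) \<subseteq> J n"
  proof
    fix x assume "x \<in> gens (Suc n)"
    then obtain d f b where dfb: "(d, f) \<in> F" "d \<le> Suc n" "b \<in> a (Suc n - d)" "x = f \<otimes> b"
      unfolding gens_def by blast
    have "d \<le> n" using F_le_D[OF dfb(1)] n by simp
    then have "b \<in> a (n - d)" using dfb(3) seq_Suc_subset Suc_diff_le by auto
    then have "x \<in> gens n" unfolding gens_def using dfb \<open>d \<le> n\<close> by blast
    then show "x \<in> J n" using gens_subset_J by blast
  qed
qed

lemma J_antimono:
  assumes "D \<le> n" shows "J (n + k) \<subseteq> J n"
proof (induction k)
  case (Suc k)
  have "J (Suc (n + k)) \<subseteq> J (n + k)" using J_Suc_subset assms by simp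
  with Suc show ?case by simp
qed simp

lemma seq_subset_J_set_add:
  assumes aK: "\<And>n. 1 \<le> n \<Longrightarrow> a n \<subseteq> K n" and n: "D \<le> n"
  shows "a n \<subseteq> J n <+> a (n + k)"
proof (induction k)
  case 0
  show ?case using ideal_subset_set_add[OF J_ideal seq_ideal] by simp
next
  case (Suc k)
  have "J n <+> a (n + k) \<subseteq> J n <+> a (n + Suc k)"
  proof (rule set_add_least[OF J_ideal seq_ideal add_ideals[OF J_ideal seq_ideal]])
    show "J n \<subseteq> J n <+> a (n + Suc k)" using ideal_subset_set_add[OF J_ideal seq_ideal] by blast
    have "a (n + k) \<subseteq> J (n + k) <+> a (Suc (n + k))"
      using aK[of "n + k"] one_le_D n unfolding K_def by simp
    also have "\<dots> \<subseteq> J n <+> a (n + Suc k)"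
    proof (rule set_add_least[OF J_ideal seq_ideal add_ideals[OF J_ideal seq_ideal]])
      show "J (n + k) \<subseteq> J n <+> a (n + Suc k)"
        using J_antimono[OF n, of k] ideal_subset_set_add(1)[OF J_ideal seq_ideal] by blast
      show "a (Suc (n + k)) \<subseteq> J n <+> a (n + Suc k)"
        using ideal_subset_set_add(2)[OF J_ideal seq_ideal] by simp
    qed
    finally show "a (n + k) \<subseteq> J n <+> a (n + Suc k)" .
  qed
  with Suc.IH show ?case by blast
qed

lemma seq_subset_J:
  assumes aK: "\<And>n. 1 \<le> n \<Longrightarrow> a n \<subseteq> K n" and n: "D \<le> n"
    and noetherian: "noetherian_ring R" and topology: "same_topology R M a"
    and M: "ideal M R" and jacobson: "\<And>\<mu>. \<mu> \<in> M \<Longrightarrow> \<one> \<ominus> \<mu> \<in> Units R"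
  shows "a n \<subseteq> J n"
proof -
  obtain A where A: "A \<subseteq> carrier R" "finite A" "a n = Idl A"
    using noetherian_ring.finetely_gen[OF noetherian seq_ideal] by blast
  obtain r where r: "ideal_pow R M r \<subseteq> a n" using topology unfolding same_topology_def by blast
  obtain N where N: "a N \<subseteq> ideal_pow R M (Suc r)" using topology unfolding same_topology_def by blast
  have Ma: "ideal (M \<cdot> a n) R" using ideal_prod_is_ideal[OF M seq_ideal] .
  have "a (max N n) \<subseteq> M \<cdot> a n"
    using seq_antimono[of N "max N n"] N ideal_prod_mono_right[OF r, of M] by auto
  then have "J n <+> a (max N n) \<subseteq> J n <+> M \<cdot> a n"
    using ideal_subset_set_add[OF J_ideal Ma]
    by (intro set_add_least[OF J_ideal seq_ideal add_ideals[OF J_ideal Ma]]) blast+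
  moreover have "a n \<subseteq> J n <+> a (max N n)"
    using seq_subset_J_set_add[OF aK n, of "max N n - n"] by simp
  ultimately have "a n \<subseteq> J n <+> M \<cdot> a n" by blast
  then show ?thesis using nakayama[OF M jacobson J_ideal A(2,1)] A(3) by simp
qed

text \<open>In degrees above \<open>D\<close> every monomial factors through a lift \<open>f t\<^sup>d\<close>, by \<open>a n = J n\<close>.\<close>
lemma monom_mem_subring:
  assumes S: "subring S (UP R)"
    and const: "\<And>r. r \<in> carrier R \<Longrightarrow> mn r 0 \<in> S"
    and lifts: "\<And>d f. (d, f) \<in> F \<Longrightarrow> mn f d \<in> S"
    and low: "\<And>k c. 1 \<le> k \<Longrightarrow> k \<le> D \<Longrightarrow> c \<in> a k \<Longrightarrow> mn c k \<in> S"
    and aJ: "\<And>n. D \<le> n \<Longrightarrow> a n \<subseteq> J n"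
  shows "c \<in> a k \<Longrightarrow> mn c k \<in> S"
proof (induction k arbitrary: c rule: less_induct)
  case (less k)
  consider "k = 0" | "1 \<le> k" "k \<le> D" | "D < k" by linarith
  then show ?case
  proof cases
    case 1
    then show ?thesis using const less.prems seq_zero by simp
  next
    case 2
    then show ?thesis using low less.prems by blast
  next
    case 3
    have "gens k \<subseteq> {c \<in> carrier R. mn c k \<in> S}"
    proof
      fix x assume "x \<in> gens k"
      then obtain d f b where dfb: "(d, f) \<in> F" "d \<le> k" "b \<in> a (k - d)" "x = f \<otimes> b"
        unfolding gens_def by blast
      have d: "1 \<le> d" "f \<in> a d" using F_mem[OF dfb(1)] by auto
      have "mn f d \<otimes>\<^bsub>UP R\<^esub> mn b (k - d) \<in> S"
        using subringE(6)[OF S lifts[OF dfb(1)] less.IH[OF _ dfb(3)]] d(1) 3 one_le_D by simp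
      moreover have "mn f d \<otimes>\<^bsub>UP R\<^esub> mn b (k - d) = mn x k"
        using P.monom_mult[of f b d "k - d"] seq_carrier[OF d(2)] seq_carrier[OF dfb(3)] dfb(2,4) by simp
      moreover have "x \<in> carrier R" using \<open>x \<in> gens k\<close> gens_carrier by blast
      ultimately show "x \<in> {c \<in> carrier R. mn c k \<in> S}" by simp
    qed
    moreover have "ideal {c \<in> carrier R. mn c k \<in> S} R" by (rule P.monom_subring_ideal[OF S const])
    ultimately have "J k \<subseteq> {c \<in> carrier R. mn c k \<in> S}"
      unfolding J_def by (intro genideal_minimal)
    then show ?thesis using aJ[of k] 3 less.prems by auto
  qed
qed

lemma rees_ring_fin_gen_algebra:
  assumes noetherian: "noetherian_ring R" and aJ: "\<And>n. D \<le> n \<Longrightarrow> a n \<subseteq> J n"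
  shows "fin_gen_algebra R Rees (rees_const R)"
proof -
  interpret Rees: ring Rees by (rule rees_ring_is_ring)
  obtain B where B: "\<And>k. B k \<subseteq> carrier R" "\<And>k. finite (B k)" "\<And>k. a k = Idl (B k)"
    using noetherian_ring.finetely_gen[OF noetherian seq_ideal] by metis
  define G where "G = (\<lambda>(d, f). mn f d) ` F \<union> (\<Union>k\<in>{1..D}. (\<lambda>c. mn c k) ` B k)"
  define S where "S = generate_ring Rees (rees_const R ` carrier R \<union> G)"
  have B_seq: "B k \<subseteq> a k" for k using genideal_self[OF B(1)] B(3) by blast
  have "finite G" unfolding G_def using finite_F B(2) by auto
  moreover have "G \<subseteq> carrier Rees"
    unfolding G_def using F_mem B_seq by (auto intro!: monom_mem_rees_carrier)
  ultimately have G: "finite G" "G \<subseteq> carrier Rees" by blast+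
  then have gen_carrier: "rees_const R ` carrier R \<union> G \<subseteq> carrier Rees"
    using rees_const_mem_rees_carrier by auto
  have S: "subring S (UP R)"
    unfolding S_def using Rees.generate_ring_is_subring[OF gen_carrier] by (rule subring_rees_ring_imp_subring)
  have gen_S: "x \<in> rees_const R ` carrier R \<union> G \<Longrightarrow> x \<in> S" for x
    unfolding S_def by (rule generate_ring.incl)
  have const: "mn r 0 \<in> S" if "r \<in> carrier R" for r
    using gen_S that unfolding rees_const_def by blast
  have lifts: "mn f d \<in> S" if "(d, f) \<in> F" for d f
    using gen_S that unfolding G_def by force
  have low: "mn c k \<in> S" if k: "1 \<le> k" "k \<le> D" and c: "c \<in> a k" for k c
  proof -
    have "mn b k \<in> G" if "b \<in> B k" for b
      unfolding G_def using k that by (intro UnI2 UN_I[of k]) auto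
    then have "B k \<subseteq> {c \<in> carrier R. mn c k \<in> S}" using gen_S B(1) by blast
    moreover have "ideal {c \<in> carrier R. mn c k \<in> S} R" by (rule P.monom_subring_ideal[OF S const])
    ultimately have "Idl (B k) \<subseteq> {c \<in> carrier R. mn c k \<in> S}" by (intro genideal_minimal)
    then show ?thesis using c B(3) by blast
  qed
  have "carrier Rees \<subseteq> S"
    using rees_carrier_subset_subring[OF S monom_mem_subring[OF S const lifts low aJ]] by simp
  moreover have "S \<subseteq> carrier Rees" unfolding S_def using Rees.generate_ring_incl[OF gen_carrier] .
  ultimately show ?thesis unfolding fin_gen_algebra_def S_def using G by blast
qed

end

text \<open>\<open>F\<close> collects the homogeneous components of positive degree of lifts of the generators
  to the Rees algebra.\<close>
lemma (in graded_ideal_seq) exists_homogeneous_lifts: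
  assumes G: "finite G" "G \<subseteq> carrier (assoc_graded R a)"
  shows "\<exists>F. homogeneous_lifts R a F \<and>
    G \<subseteq> (\<lambda>p. Rees_shift +>\<^bsub>Rees\<^esub> p) ` homogeneous_lifts.K_subring R a F"
proof -
  have "\<forall>g\<in>G. \<exists>p \<in> rees_carrier R a. g = Rees_shift +>\<^bsub>Rees\<^esub> p"
    using G(2) unfolding assoc_graded_def FactRing_def A_RCOSETS_def' by auto
  then obtain lift where lift: "\<And>g. g \<in> G \<Longrightarrow> lift g \<in> rees_carrier R a"
    "\<And>g. g \<in> G \<Longrightarrow> g = Rees_shift +>\<^bsub>Rees\<^esub> lift g" by metis
  define F where "F = {(n, cf p n) | p n. p \<in> lift ` G \<and> 1 \<le> n \<and> n \<le> deg R p}"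
  have "F \<subseteq> (\<Union>p\<in>lift ` G. (\<lambda>n. (n, cf p n)) ` {..deg R p})" unfolding F_def by auto
  then have "finite F" by (rule finite_subset) (use G(1) in auto)
  moreover have "1 \<le> d \<and> f \<in> a d" if "(d, f) \<in> F" for d f
  proof -
    have "\<exists>p \<in> lift ` G. 1 \<le> d \<and> f = cf p d" using that unfolding F_def by auto
    then obtain p where "p \<in> lift ` G" "1 \<le> d" "f = cf p d" by blast
    then show ?thesis using lift(1) unfolding rees_carrier_def by auto
  qed
  ultimately interpret lifts: homogeneous_lifts R a F
    by (intro homogeneous_lifts.intro graded_ideal_seq_axioms homogeneous_lifts_axioms.intro) blast+
  have "lift g \<in> lifts.K_subring" if "g \<in> G" for g
    using that lift(1) by (intro lifts.K_subringI) (auto simp: F_def)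
  then show ?thesis using lift(2) lifts.homogeneous_lifts_axioms by blast
qed

theorem lemma4p6:
  fixes R :: "('a, 'b) ring_scheme" and m :: "'a set" and a :: "nat \<Rightarrow> 'a set"
  assumes "noetherian_ring R"
    and "local_ring_with R m"
    and "graded_seq_m_primary R m a"
    and "same_topology R m a"
    and "fin_gen_algebra (R Quot (a 1)) (assoc_graded R a)
           (\<lambda>c. gr_const R a (SOME r. r \<in> c))"
  shows "fin_gen_algebra R (rees_ring R a) (rees_const R)"
proof -
  have cring: "cring R" and m: "ideal m R"
    using assms(2) maximalideal.axioms(1) unfolding local_ring_with_def by auto
  interpret graded_ideal_seq R a
    using graded_seq_m_primary_imp_graded_ideal_seq[OF cring assms(3)] .
  obtain G where G: "finite G" "G \<subseteq> carrier (assoc_graded R a)"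
    and gen: "generate_ring (assoc_graded R a)
      ((\<lambda>c. gr_const R a (SOME r. r \<in> c)) ` carrier (R Quot (a 1)) \<union> G) = carrier (assoc_graded R a)"
    using assms(5) unfolding fin_gen_algebra_def by blast
  obtain F where "homogeneous_lifts R a F"
    and G_lifts: "G \<subseteq> (\<lambda>p. Rees_shift +>\<^bsub>Rees\<^esub> p) ` homogeneous_lifts.K_subring R a F"
    using exists_homogeneous_lifts[OF G] by blast
  then interpret homogeneous_lifts R a F by simp
  have "a n \<subseteq> K n" if "1 \<le> n" for n
    using seq_subset_K[OF assoc_graded_subset_image_K_subring[OF gen G_lifts] that] .
  then have "a n \<subseteq> J n" if "D \<le> n" for n
    using seq_subset_J[OF _ that assms(1,4) m local_ring_one_minus_Units[OF assms(2)]] by blast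
  then show ?thesis using rees_ring_fin_gen_algebra[OF assms(1)] by blast
qed

end
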